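(* Let $(\gamma_i)_{i=0}^{n+1}$ be a linear sequence of geodesics in $\mathbb{H}^2$, and define $u_i$ ($0\le i\le n$) and $v_i$ ($1 \le i \le n$) as in the context. Let $D = d(\gamma_0, \gamma_{n+1})$. Suppose $u_0, u_n \le 1$. Then $$\Big| \sum_{i=1}^n v_i \Big| \le D + 2\log D - \log u_0 - \log u_n + 3.$$
   Context: A linear sequence of geodesics in $\mathbb{H}^2$ is a sequence of pairwise disjoint geodesics, consecutive ones having a common orthogonal, such that each geodesic separates those before it from those after it. Each $\gamma_i$ is oriented so that the geodesics following it lie to its left. Let $\eta_i$ be the common orthogonal of $\gamma_i$ and $\gamma_{i+1}$, oriented from $\gamma_i$ to $\gamma_{i+1}$; $u_i>0$ is the length of $\eta_i$ (the distance from $\gamma_i$ to $\gamma_{i+1}$), and $v_i$ is the signed distance along $\gamma_i$ (with its orientation) from the foot of $\eta_{i-1}$ on $\gamma_i$ to the foot of $\eta_i$ on $\gamma_i$. $d(\gamma_0,\gamma_{n+1})$ is the distance between the two geodesics. *)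

theory Defs
  imports "HOL-Analysis.Analysis"
begin

text \<open>Hyperboloid model of the hyperbolic plane in Minkowski space R^(2,1).\<close>

type_synonym pt = "real \<times> real \<times> real"

definition mink :: "pt \<Rightarrow> pt \<Rightarrow> real" where
  "mink x y = fst x * fst y + fst (snd x) * fst (snd y) - snd (snd x) * snd (snd y)"

definition hyp :: "pt set" where
  "hyp = {x. mink x x = -1 \<and> snd (snd x) > 0}"

definition hdist :: "pt \<Rightarrow> pt \<Rightarrow> real" where
  "hdist x y = arcosh (- mink x y)"

text \<open>An oriented geodesic is given by a base point p and a unit tangent w at p;
  its unit-speed parametrisation is t \<mapsto> cosh t p + sinh t w.\<close>
type_synonym geod = "pt \<times> pt"

definition geod_ok :: "geod \<Rightarrow> bool" where
  "geod_ok g \<longleftrightarrow> fst g \<in> hyp \<and> mink (fst g) (snd g) = 0 \<and> mink (snd g) (snd g) = 1"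

definition gpt :: "geod \<Rightarrow> real \<Rightarrow> pt" where
  "gpt g t = cosh t *\<^sub>R fst g + sinh t *\<^sub>R snd g"

definition gtan :: "geod \<Rightarrow> real \<Rightarrow> pt" where
  "gtan g t = sinh t *\<^sub>R fst g + cosh t *\<^sub>R snd g"

definition gset :: "geod \<Rightarrow> pt set" where
  "gset g = range (gpt g)"

text \<open>Euclidean 3x3 determinant, used to fix an orientation of the plane.\<close>
definition det3 :: "pt \<Rightarrow> pt \<Rightarrow> pt \<Rightarrow> real" where
  "det3 x y z =
     fst x * (fst (snd y) * snd (snd z) - snd (snd y) * fst (snd z))
   - fst (snd x) * (fst y * snd (snd z) - snd (snd y) * fst z)
   + snd (snd x) * (fst y * fst (snd z) - fst (snd y) * fst z)"

text \<open>Open half-planes to the left / right of an oriented geodesic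
  (independent of the chosen parametrisation of the oriented geodesic).\<close>
definition gleft :: "geod \<Rightarrow> pt set" where
  "gleft g = {x \<in> hyp. det3 (fst g) (snd g) x > 0}"

definition gright :: "geod \<Rightarrow> pt set" where
  "gright g = {x \<in> hyp. det3 (fst g) (snd g) x < 0}"

definition gdist :: "geod \<Rightarrow> geod \<Rightarrow> real" where
  "gdist g h = Inf {hdist x y | x y. x \<in> gset g \<and> y \<in> gset h}"

end

theory Submission
  imports Defs
begin

(* Let N be the unit normal of gamma_0 in the hyperboloid model.  Along the chain we follow the
   N-coordinates a_i, b_i of the two null vectors P_i + W_i and P_i - W_i, where P_i is the foot of
   eta_i on gamma_i and W_i the unit tangent of gamma_i there (they point to the two ends of
   gamma_i), together with g_i = <N, N_i> for the normal N_i of gamma_i.  Crossing eta_i acts on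
   (a, b, g) by an explicit matrix in cosh u_i and sinh u_i with nonnegative entries, and sliding
   along gamma_(i+1) by v_(i+1) scales a by exp v_(i+1) and b by exp (-v_(i+1)).  Hence
   a_n >= sinh u_0 exp S and b_n >= sinh u_0 exp (-S) for S = v_1 + ... + v_n.  For y on
   gamma_(n+1), <N, y> is at least the geometric mean of the N-coordinates of the two null vectors
   of gamma_(n+1), and <N, y> <= sinh d(x, y) for x on gamma_0.  So sinh D is bounded below by
   sinh u_0 exp |S| times a factor depending only on u_n, and taking logarithms gives the claim. *)

section \<open>Minkowski space\<close>

definition lcross :: "pt \<Rightarrow> pt \<Rightarrow> pt" where
  "lcross a b = (fst (snd a) * snd (snd b) - snd (snd a) * fst (snd b),
                 snd (snd a) * fst b - fst a * snd (snd b),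
                 fst (snd a) * fst b - fst a * fst (snd b))"

lemma mink_lcross: "mink (lcross a b) x = det3 a b x"
  by (simp add: mink_def lcross_def det3_def algebra_simps)

lemma mink_commute: "mink a b = mink b a"
  by (simp add: mink_def algebra_simps)

lemma mink_add_left [simp]: "mink (a + b) c = mink a c + mink b c"
  and mink_add_right [simp]: "mink c (a + b) = mink c a + mink c b"
  and mink_diff_left [simp]: "mink (a - b) c = mink a c - mink b c"
  and mink_diff_right [simp]: "mink c (a - b) = mink c a - mink c b"
  and mink_scaleR_left [simp]: "mink (r *\<^sub>R a) c = r * mink a c"
  and mink_scaleR_right [simp]: "mink c (r *\<^sub>R a) = r * mink c a"
  by (simp_all add: mink_def algebra_simps)

lemma mink_lcross_lcross:
  "mink (lcross a b) (lcross c d) = mink a d * mink b c - mink a c * mink b d"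
  by (simp add: mink_def lcross_def algebra_simps)

lemma det3_cramer:
  "det3 a b c *\<^sub>R z = det3 z b c *\<^sub>R a + det3 a z c *\<^sub>R b + det3 a b z *\<^sub>R c"
  by (cases a; cases b; cases c; cases z) (simp add: det3_def algebra_simps)

lemma det3_gram:
  "mink x x * (mink m m * mink y y - mink m y * mink m y)
   - mink x m * (mink x m * mink y y - mink m y * mink x y)
   + mink x y * (mink x m * mink m y - mink m m * mink x y) = - (det3 x m y)\<^sup>2"
  by (simp add: mink_def det3_def power2_eq_square algebra_simps)

lemma det3_repeated: "det3 a b a = 0" "det3 a b b = 0"
  by (simp_all add: det3_def algebra_simps)

lemma det3_swap13: "det3 a b c = - det3 c b a"
  by (simp add: det3_def algebra_simps)

lemma lcross_add_left: "lcross (a + b) c = lcross a c + lcross b c"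
  and lcross_scaleR_left: "lcross (r *\<^sub>R a) c = r *\<^sub>R lcross a c"
  and lcross_scaleR_right: "lcross a (r *\<^sub>R c) = r *\<^sub>R lcross a c"
  by (cases a; cases b; cases c; simp add: lcross_def algebra_simps)+

lemma lcross_combination:
  "lcross (a *\<^sub>R p + b *\<^sub>R w) (c *\<^sub>R p + d *\<^sub>R w) = (a * d - b * c) *\<^sub>R lcross p w"
  by (cases p; cases w) (simp add: lcross_def algebra_simps)

definition frame :: "pt \<Rightarrow> pt \<Rightarrow> bool" where
  "frame p w \<longleftrightarrow> mink p p = -1 \<and> mink p w = 0 \<and> mink w w = 1"

lemma frame_lcross:
  assumes "frame p w"
  shows "mink (lcross p w) (lcross p w) = 1" "mink (lcross p w) p = 0" "mink (lcross p w) w = 0"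
  using assms by (simp_all add: frame_def mink_lcross_lcross mink_commute[of w p])
    (simp_all add: mink_lcross det3_repeated)

lemma frame_expansion:
  assumes "frame p w"
  shows "z = (- mink z p) *\<^sub>R p + mink z w *\<^sub>R w + mink z (lcross p w) *\<^sub>R lcross p w"
proof -
  have f: "mink p p = -1" "mink p w = 0" "mink w w = 1"
    using assms by (auto simp: frame_def)
  have "det3 p w (lcross p w) = 1" "det3 z w (lcross p w) = - mink z p"
    "det3 p z (lcross p w) = mink z w" "det3 p w z = mink z (lcross p w)"
    using frame_lcross(1)[OF assms] f
    by (simp_all add: mink_lcross[symmetric] mink_lcross_lcross mink_commute)
  then show ?thesis
    using det3_cramer[of p w "lcross p w" z] by simp
qed

section \<open>Geodesics in the hyperboloid model\<close>

definition gnormal :: "geod \<Rightarrow> pt" where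
  "gnormal g = lcross (fst g) (snd g)"

lemma lcross_gpt_gtan: "lcross (gpt g t) (gtan g t) = gnormal g"
proof -
  have "cosh t * cosh t - sinh t * sinh t = 1"
    using hyperbolic_pythagoras[of t] by (simp add: power2_eq_square)
  then show ?thesis
    by (simp add: gpt_def gtan_def gnormal_def lcross_combination)
qed

lemma frame_gpt_gtan:
  assumes "geod_ok g"
  shows "frame (gpt g t) (gtan g t)"
proof -
  have "mink (fst g) (fst g) = -1" "mink (fst g) (snd g) = 0" "mink (snd g) (snd g) = 1"
    using assms by (auto simp: geod_ok_def hyp_def)
  moreover have "cosh t * cosh t - sinh t * sinh t = 1"
    using hyperbolic_pythagoras[of t] by (simp add: power2_eq_square)
  ultimately show ?thesis
    by (simp add: frame_def gpt_def gtan_def mink_commute[of "snd g" "fst g"] algebra_simps)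
qed

lemma gpt_plus_gtan: "gpt g t + gtan g t = exp t *\<^sub>R (fst g + snd g)"
proof -
  have "gpt g t + gtan g t = (cosh t + sinh t) *\<^sub>R (fst g + snd g)"
    by (simp add: gpt_def gtan_def algebra_simps)
  then show ?thesis by (simp add: cosh_plus_sinh)
qed

lemma gpt_minus_gtan: "gpt g t - gtan g t = exp (- t) *\<^sub>R (fst g - snd g)"
proof -
  have "gpt g t - gtan g t = (cosh t - sinh t) *\<^sub>R (fst g - snd g)"
    by (simp add: gpt_def gtan_def algebra_simps)
  then show ?thesis by (simp add: cosh_minus_sinh)
qed

lemma geod_ok_gnormal:
  assumes "geod_ok g"
  shows "mink (gnormal g) (gnormal g) = 1" "mink (gnormal g) (gpt g t) = 0"
    "mink (gnormal g) (gtan g t) = 0"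
  using frame_lcross[OF frame_gpt_gtan[OF assms, of t]] by (simp_all add: lcross_gpt_gtan)

lemma gpt_plus_gtan_shift: "gpt g t + gtan g t = exp (t - s) *\<^sub>R (gpt g s + gtan g s)"
  and gpt_minus_gtan_shift: "gpt g t - gtan g t = exp (s - t) *\<^sub>R (gpt g s - gtan g s)"
  by (simp_all add: gpt_plus_gtan gpt_minus_gtan mult_exp_exp)

lemma hyp_mink_neg:
  assumes "x \<in> hyp" "y \<in> hyp"
  shows "mink x y < 0"
proof -
  obtain x1 x2 x3 y1 y2 y3 where xy: "x = (x1, x2, x3)" "y = (y1, y2, y3)"
    by (metis prod_cases3)
  have x: "x1\<^sup>2 + x2\<^sup>2 = x3\<^sup>2 - 1" "x3 > 0" and y: "y1\<^sup>2 + y2\<^sup>2 = y3\<^sup>2 - 1" "y3 > 0"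
    using assms xy by (auto simp: hyp_def mink_def power2_eq_square algebra_simps)
  have "(x1 * y1 + x2 * y2)\<^sup>2 \<le> (x1\<^sup>2 + x2\<^sup>2) * (y1\<^sup>2 + y2\<^sup>2)"
    using zero_le_power2[of "x1 * y2 - x2 * y1"] by (simp add: power2_eq_square algebra_simps)
  also have "\<dots> = (x3\<^sup>2 - 1) * (y3\<^sup>2 - 1)"
    by (simp only: x(1) y(1))
  also have "\<dots> = (x3 * y3)\<^sup>2 - (x3\<^sup>2 + y3\<^sup>2 - 1)"
    by (simp add: power_mult_distrib algebra_simps)
  also have "\<dots> < (x3 * y3)\<^sup>2"
    using x(1) y(2) zero_le_power2[of x1] zero_le_power2[of x2] zero_less_power[of y3 2] by linarith
  finally have "x1 * y1 + x2 * y2 < x3 * y3"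
    by (rule power2_less_imp_less) (use x(2) y(2) in simp)
  then show ?thesis
    using xy by (simp add: mink_def)
qed

lemma hyp_if_mink_neg:
  assumes "mink x x = -1" "p \<in> hyp" "mink x p < 0"
  shows "x \<in> hyp"
proof (rule ccontr)
  assume "x \<notin> hyp"
  then have "snd (snd x) \<le> 0"
    using assms(1) by (simp add: hyp_def)
  moreover have "snd (snd x) \<noteq> 0"
  proof
    assume "snd (snd x) = 0"
    then have "fst x * fst x + fst (snd x) * fst (snd x) = -1"
      using assms(1) by (simp add: mink_def)
    then show False
      using sum_squares_ge_zero[of "fst x" "fst (snd x)"] by linarith
  qed
  ultimately have "- x \<in> hyp"
    using assms(1) by (simp add: hyp_def mink_def)
  then have "mink (- x) p < 0"
    using assms(2) by (rule hyp_mink_neg)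
  with assms(3) show False
    by (simp add: mink_def)
qed

lemma gpt_in_hyp:
  assumes "geod_ok g"
  shows "gpt g t \<in> hyp"
proof (rule hyp_if_mink_neg)
  show "fst g \<in> hyp" "mink (gpt g t) (gpt g t) = -1"
    using assms frame_gpt_gtan[OF assms] by (auto simp: geod_ok_def frame_def)
  have "mink (fst g) (fst g) = -1" "mink (snd g) (fst g) = 0"
    using assms by (auto simp: geod_ok_def hyp_def mink_commute[of "snd g" "fst g"])
  then show "mink (gpt g t) (fst g) < 0"
    by (simp add: gpt_def)
qed

lemma frame_lcross_lcross:
  assumes "frame p w"
  shows "lcross (lcross p w) w = p"
proof -
  have "mink (lcross (lcross p w) w) p = - mink (lcross p w) (lcross p w)"
    by (simp add: mink_lcross det3_swap13[of "lcross p w"])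
  then have "mink (lcross (lcross p w) w) p = -1"
    using frame_lcross(1)[OF assms] by simp
  moreover have "mink (lcross (lcross p w) w) w = 0" "mink (lcross (lcross p w) w) (lcross p w) = 0"
    by (simp_all add: mink_lcross det3_repeated)
  ultimately show ?thesis
    using frame_expansion[OF assms, of "lcross (lcross p w) w"] by simp
qed

lemma mink_gnormal: "mink (gnormal g) x = det3 (fst g) (snd g) x"
  by (simp add: gnormal_def mink_lcross)

lemma cosh_sinh_system_eq_0:
  fixes x y u :: real
  assumes "cosh u * x + sinh u * y = 0" "sinh u * x + cosh u * y = 0"
  shows "x = 0" "y = 0"
proof -
  have py: "cosh u * cosh u - sinh u * sinh u = 1"
    using hyperbolic_pythagoras[of u] by (simp add: power2_eq_square)
  have "x = cosh u * (cosh u * x + sinh u * y) - sinh u * (sinh u * x + cosh u * y)"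
    "y = cosh u * (sinh u * x + cosh u * y) - sinh u * (cosh u * x + sinh u * y)"
    using py by (simp_all add: algebra_simps)
  then show "x = 0" "y = 0"
    using assms by simp_all
qed

lemma orthogonal_geodesic_end:
  assumes g: "geod_ok g" and e: "geod_ok e" and u: "0 < u"
    and foot: "gpt e 0 = gpt g t" and perp: "mink (gtan e 0) (gtan g t) = 0"
    and left: "gpt e u \<in> gleft g"
  shows "gpt e u = cosh u *\<^sub>R gpt g t + sinh u *\<^sub>R gnormal g"
    and "gtan e u = sinh u *\<^sub>R gpt g t + cosh u *\<^sub>R gnormal g"
proof -
  define P W N where "P = gpt g t" and "W = gtan g t" and "N = gnormal g"
  have fr: "frame P W" and NPW: "lcross P W = N"
    using frame_gpt_gtan[OF g] lcross_gpt_gtan by (auto simp: P_def W_def N_def)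
  have N: "mink N N = 1" "mink N P = 0"
    using frame_lcross[OF fr] by (simp_all add: NPW)
  define k where "k = mink (snd e) N"
  have eP: "fst e = P"
    using foot by (simp add: gpt_def P_def)
  have "mink (snd e) P = 0" "mink (snd e) W = 0"
    using e perp eP by (simp_all add: geod_ok_def gtan_def W_def mink_commute)
  then have ek: "snd e = k *\<^sub>R N"
    using frame_expansion[OF fr, of "snd e"] by (simp add: NPW k_def)
  have "k * k = 1"
    using e N(1) by (simp add: geod_ok_def ek)
  have gpt_e: "gpt e u = cosh u *\<^sub>R P + (sinh u * k) *\<^sub>R N"
    by (simp add: gpt_def eP ek)
  with left have "0 < sinh u * k"
    using N by (simp add: gleft_def N_def mink_gnormal[symmetric])
  with u have "0 < k"
    by (simp add: zero_less_mult_iff)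
  with \<open>k * k = 1\<close> have "k = 1"
    by (auto simp: square_eq_1_iff)
  then show "gpt e u = cosh u *\<^sub>R gpt g t + sinh u *\<^sub>R gnormal g"
    and "gtan e u = sinh u *\<^sub>R gpt g t + cosh u *\<^sub>R gnormal g"
    using gpt_e by (simp_all add: gtan_def eP ek P_def N_def)
qed

lemma orthogonal_frame_transfer:
  assumes g: "geod_ok g" and h: "geod_ok h"
    and foot: "gpt h s = cosh u *\<^sub>R gpt g t + sinh u *\<^sub>R gnormal g"
    and perp: "mink (sinh u *\<^sub>R gpt g t + cosh u *\<^sub>R gnormal g) (gtan h s) = 0"
  obtains \<epsilon> :: real where "\<epsilon> = 1 \<or> \<epsilon> = -1"
    and "gtan h s = \<epsilon> *\<^sub>R gtan g t"
    and "gnormal h = \<epsilon> *\<^sub>R (sinh u *\<^sub>R gpt g t + cosh u *\<^sub>R gnormal g)"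
proof -
  define P W N T where "P = gpt g t" and "W = gtan g t" and "N = gnormal g" and "T = gtan h s"
  have fr: "frame P W" and NPW: "lcross P W = N"
    using frame_gpt_gtan[OF g] lcross_gpt_gtan by (auto simp: P_def W_def N_def)
  have "mink (gpt h s) T = 0"
    using frame_gpt_gtan[OF h] by (simp add: frame_def T_def)
  then have "cosh u * mink T P + sinh u * mink T N = 0"
    by (simp add: foot P_def N_def mink_commute)
  moreover have "sinh u * mink T P + cosh u * mink T N = 0"
    using perp by (simp add: P_def N_def T_def mink_commute)
  ultimately have "mink T P = 0" "mink T N = 0"
    by (rule cosh_sinh_system_eq_0)+
  then have T: "T = mink T W *\<^sub>R W"
    using frame_expansion[OF fr, of T] by (simp add: NPW)
  have "mink T T = 1" "mink W W = 1"
    using frame_gpt_gtan[OF h] fr by (simp_all add: frame_def T_def)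
  then have "mink T W = 1 \<or> mink T W = -1"
    using T by (metis mink_scaleR_left mink_scaleR_right mult.right_neutral square_eq_1_iff)
  moreover have "gnormal h = lcross (cosh u *\<^sub>R P + sinh u *\<^sub>R N) (mink T W *\<^sub>R W)"
    using lcross_gpt_gtan[of h s] foot T by (simp add: P_def N_def T_def)
  then have "gnormal h = mink T W *\<^sub>R (sinh u *\<^sub>R P + cosh u *\<^sub>R N)"
    using frame_lcross_lcross[OF fr]
    by (simp add: lcross_add_left lcross_scaleR_left lcross_scaleR_right NPW algebra_simps)
  ultimately show ?thesis
    using that[of "mink T W"] T unfolding P_def W_def N_def T_def by blast
qed

lemma orthogonal_transport:
  assumes g: "geod_ok g" and h: "geod_ok h" and e: "geod_ok e" and u: "0 < u"
    and foot0: "gpt e 0 = gpt g t" and perp0: "mink (gtan e 0) (gtan g t) = 0"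
    and foot1: "gpt e u = gpt h s" and perp1: "mink (gtan e u) (gtan h s) = 0"
    and left: "gset h \<subseteq> gleft g"
  obtains \<epsilon> :: real where "\<epsilon> = 1 \<or> \<epsilon> = -1"
    and "gpt h s = cosh u *\<^sub>R gpt g t + sinh u *\<^sub>R gnormal g"
    and "gtan h s = \<epsilon> *\<^sub>R gtan g t"
    and "gnormal h = \<epsilon> *\<^sub>R (sinh u *\<^sub>R gpt g t + cosh u *\<^sub>R gnormal g)"
proof -
  have "gpt h s \<in> gset h"
    by (simp add: gset_def)
  with left foot1 have "gpt e u \<in> gleft g"
    by auto
  note e_end = orthogonal_geodesic_end[OF g e u foot0 perp0 this]
  show ?thesis
    using orthogonal_frame_transfer[OF g h, of s u t] that e_end foot1 perp1 by metis
qed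

section \<open>Distances\<close>

lemma abs_mink_normal_le_sinh_hdist:
  assumes x: "x \<in> hyp" and y: "y \<in> hyp" and N: "mink N N = 1" "mink x N = 0"
  shows "\<bar>mink N y\<bar> \<le> sinh (hdist x y)"
proof -
  define m where "m = - mink x y"
  have "mink x x = -1" "mink y y = -1"
    using x y by (simp_all add: hyp_def)
  then have m2: "(mink N y)\<^sup>2 + (det3 x N y)\<^sup>2 = m\<^sup>2 - 1"
    using det3_gram[of x N y] N by (simp add: m_def power2_eq_square algebra_simps)
  then have "1 \<le> m\<^sup>2"
    using zero_le_power2[of "mink N y"] zero_le_power2[of "det3 x N y"] by linarith
  moreover have "0 < m"
    using hyp_mink_neg[OF x y] by (simp add: m_def)
  ultimately have "1 \<le> m"
    using power2_le_imp_le[of 1 m] by simp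
  have "\<bar>mink N y\<bar> = sqrt ((mink N y)\<^sup>2)"
    by simp
  also have "\<dots> \<le> sqrt (m\<^sup>2 - 1)"
    using m2 zero_le_power2[of "det3 x N y"] by (intro real_sqrt_le_mono) linarith
  also have "\<dots> = sinh (hdist x y)"
    unfolding hdist_def m_def[symmetric] using \<open>1 \<le> m\<close> by (rule sinh_arcosh_real[symmetric])
  finally show ?thesis .
qed

lemma le_sinh_gdist:
  assumes "\<And>x y. x \<in> gset g \<Longrightarrow> y \<in> gset h \<Longrightarrow> K \<le> sinh (hdist x y)"
  shows "K \<le> sinh (gdist g h)"
proof -
  have "arsinh K \<le> gdist g h"
    unfolding gdist_def
  proof (rule cInf_greatest)
    have "gpt g 0 \<in> gset g" "gpt h 0 \<in> gset h"
      by (simp_all add: gset_def)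
    then show "{hdist x y |x y. x \<in> gset g \<and> y \<in> gset h} \<noteq> {}"
      by blast
    show "arsinh K \<le> d" if "d \<in> {hdist x y |x y. x \<in> gset g \<and> y \<in> gset h}" for d
    proof -
      from that obtain x y where "x \<in> gset g" "y \<in> gset h" "d = hdist x y"
        by blast
      then have "sinh (arsinh K) \<le> sinh d"
        using assms by simp
      then show ?thesis
        by (simp only: sinh_real_le_iff)
    qed
  qed
  then have "sinh (arsinh K) \<le> sinh (gdist g h)"
    by (simp only: sinh_real_le_iff)
  then show ?thesis
    by simp
qed

lemma sqrt_null_product_le_mink_gpt:
  assumes "0 \<le> mink N (gpt h s + gtan h s)" "0 \<le> mink N (gpt h s - gtan h s)"
  shows "sqrt (mink N (gpt h s + gtan h s) * mink N (gpt h s - gtan h s)) \<le> mink N (gpt h r)"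
proof -
  define a b where "a = mink N (fst h + snd h)" and "b = mink N (fst h - snd h)"
  have "0 \<le> a" "0 \<le> b"
    using assms by (simp_all add: gpt_plus_gtan gpt_minus_gtan a_def b_def zero_le_mult_iff)
  have "mink N (gpt h s + gtan h s) * mink N (gpt h s - gtan h s)
      = (exp r * a) * (exp (- r) * b)"
    by (simp add: gpt_plus_gtan gpt_minus_gtan a_def b_def exp_minus field_simps)
  also have "sqrt \<dots> \<le> (exp r * a + exp (- r) * b) / 2"
    using \<open>0 \<le> a\<close> \<open>0 \<le> b\<close> by (intro arith_geo_mean_sqrt) simp_all
  also have "\<dots> = (mink N (gpt h r + gtan h r) + mink N (gpt h r - gtan h r)) / 2"
    by (simp add: gpt_plus_gtan gpt_minus_gtan a_def b_def)
  also have "\<dots> = mink N (gpt h r)"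
    by simp
  finally show ?thesis .
qed

section \<open>Real estimates\<close>

lemma sinh_ge_self:
  fixes x :: real
  assumes "0 \<le> x"
  shows "x \<le> sinh x"
  using real_le_x_sinh[OF assms] by (simp add: sinh_field_def exp_minus)

lemma cosh_eq_sinh_half:
  fixes x :: real
  shows "cosh x = 1 + 2 * (sinh (x / 2))\<^sup>2"
  using cosh_double[of "x / 2"] by (simp add: cosh_square_eq)

lemma sinh_le_mult_exp:
  fixes x :: real
  assumes "0 \<le> x"
  shows "sinh x \<le> x * exp x"
proof -
  have "exp x * (1 - 2 * x) \<le> exp x * exp (- 2 * x)"
    using exp_ge_add_one_self[of "- 2 * x"] by (intro mult_left_mono) simp_all
  also have "\<dots> = exp (- x)"
    by (simp flip: exp_add)
  finally show ?thesis
    by (simp add: sinh_field_def algebra_simps)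
qed

lemma ln_le_of_sinh_bounds:
  fixes L D :: real
  assumes "0 < L" "L \<le> (sinh D)\<^sup>2" "L \<le> 2 * sinh D"
  shows "ln L \<le> D + 2 * ln D + 3"
proof -
  have "0 < sinh D"
    using assms(1,3) by linarith
  then have "0 < D"
    by simp
  show ?thesis
  proof (cases "1 \<le> D")
    case True
    have "2 * sinh D \<le> exp D"
      by (simp add: sinh_field_def)
    then have "L \<le> exp D"
      using assms(3) by linarith
    then have "ln L \<le> ln (exp D)"
      using assms(1) by (rule ln_mono)
    moreover have "0 \<le> ln D"
      using True by simp
    ultimately show ?thesis
      by simp
  next
    case False
    have "L \<le> (D * exp D)\<^sup>2"
      using assms(2) sinh_le_mult_exp[of D] \<open>0 < D\<close> by (smt (verit) power_mono sinh_real_nonneg_iff)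
    then have "ln L \<le> ln ((D * exp D)\<^sup>2)"
      using assms(1) by (rule ln_mono)
    also have "\<dots> = 2 * ln D + 2 * D"
      using \<open>0 < D\<close> by (simp add: ln_mult ln_realpow)
    finally show ?thesis
      using False by linarith
  qed
qed

lemma chain_step_ge:
  fixes a b g c sh :: real
  assumes "1 \<le> c" "0 \<le> sh" "0 \<le> a" "0 \<le> b" "1 \<le> g"
  shows "a \<le> (c + 1) / 2 * a + (c - 1) / 2 * b + sh * g"
    and "b \<le> (c - 1) / 2 * a + (c + 1) / 2 * b + sh * g"
    and "sh \<le> (c + 1) / 2 * a + (c - 1) / 2 * b + sh * g"
    and "sh \<le> (c - 1) / 2 * a + (c + 1) / 2 * b + sh * g"
    and "(c - 1) / 2 * b \<le> (c + 1) / 2 * a + (c - 1) / 2 * b + sh * g"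
    and "(c - 1) / 2 * a \<le> (c - 1) / 2 * a + (c + 1) / 2 * b + sh * g"
    and "1 \<le> sh * (a + b) / 2 + c * g"
proof -
  have "0 \<le> (c - 1) / 2 * a" "0 \<le> (c - 1) / 2 * b" "0 \<le> sh * (a + b) / 2"
    using assms by simp_all
  moreover have "1 * a \<le> (c + 1) / 2 * a" "1 * b \<le> (c + 1) / 2 * b" "1 * g \<le> c * g"
    using assms by (intro mult_right_mono; simp)+
  moreover have "sh * 1 \<le> sh * g"
    using assms by (intro mult_left_mono)
  ultimately show "a \<le> (c + 1) / 2 * a + (c - 1) / 2 * b + sh * g"
    and "b \<le> (c - 1) / 2 * a + (c + 1) / 2 * b + sh * g"
    and "sh \<le> (c + 1) / 2 * a + (c - 1) / 2 * b + sh * g"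
    and "sh \<le> (c - 1) / 2 * a + (c + 1) / 2 * b + sh * g"
    and "(c - 1) / 2 * b \<le> (c + 1) / 2 * a + (c - 1) / 2 * b + sh * g"
    and "(c - 1) / 2 * a \<le> (c - 1) / 2 * a + (c + 1) / 2 * b + sh * g"
    and "1 \<le> sh * (a + b) / 2 + c * g"
    using assms by linarith+
qed

lemma chain_growth:
  fixes a b g c sh v :: "nat \<Rightarrow> real" and n m :: nat
  assumes init: "a 0 = 0" "b 0 = 0" "g 0 = 1"
    and c: "\<And>i. i < n \<Longrightarrow> 1 \<le> c i" and sh: "\<And>i. i < n \<Longrightarrow> 0 \<le> sh i"
    and a_Suc: "\<And>i. i < n \<Longrightarrow>
      a (Suc i) = exp (v (Suc i)) * ((c i + 1) / 2 * a i + (c i - 1) / 2 * b i + sh i * g i)"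
    and b_Suc: "\<And>i. i < n \<Longrightarrow>
      b (Suc i) = exp (- v (Suc i)) * ((c i - 1) / 2 * a i + (c i + 1) / 2 * b i + sh i * g i)"
    and g_Suc: "\<And>i. i < n \<Longrightarrow> g (Suc i) = sh i * (a i + b i) / 2 + c i * g i"
    and m: "1 \<le> m" "m \<le> n"
  shows "sh 0 * exp (\<Sum>k=1..m. v k) \<le> a m \<and> sh 0 * exp (- (\<Sum>k=1..m. v k)) \<le> b m \<and> 1 \<le> g m"
  using m
proof (induction m rule: nat_induct_at_least)
  case base
  then show ?case
    using init c[of 0] a_Suc[of 0] b_Suc[of 0] g_Suc[of 0] by simp
next
  case (Suc m)
  define S where "S = (\<Sum>k=1..m. v k)"
  have IH: "sh 0 * exp S \<le> a m" "sh 0 * exp (- S) \<le> b m" "1 \<le> g m"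
    using Suc by (auto simp: S_def)
  have "0 \<le> sh 0"
    using sh Suc.prems by simp
  then have ab: "0 \<le> a m" "0 \<le> b m"
    using IH(1,2) by (smt (verit) exp_ge_zero mult_nonneg_nonneg)+
  have csh: "1 \<le> c m" "0 \<le> sh m"
    using c sh Suc.prems by simp_all
  note step = chain_step_ge[OF csh ab IH(3)]
  have S_Suc: "(\<Sum>k=1..Suc m. v k) = S + v (Suc m)"
    using Suc.hyps by (simp add: S_def)
  have "sh 0 * exp (S + v (Suc m)) = exp (v (Suc m)) * (sh 0 * exp S)"
    by (simp add: mult_exp_exp algebra_simps)
  also have "\<dots> \<le> exp (v (Suc m)) * a m"
    using IH(1) by simp
  also have "\<dots> \<le> a (Suc m)"
    using step(1) Suc.prems by (simp add: a_Suc)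
  finally have a_ge: "sh 0 * exp (S + v (Suc m)) \<le> a (Suc m)" .
  have "sh 0 * exp (- (S + v (Suc m))) = exp (- v (Suc m)) * (sh 0 * exp (- S))"
    by (simp add: mult_exp_exp algebra_simps)
  also have "\<dots> \<le> exp (- v (Suc m)) * b m"
    using IH(2) by simp
  also have "\<dots> \<le> b (Suc m)"
    using step(2) Suc.prems by (simp add: b_Suc)
  finally have b_ge: "sh 0 * exp (- (S + v (Suc m))) \<le> b (Suc m)" .
  show ?case
    unfolding S_Suc using a_ge b_ge step(7) Suc.prems by (simp add: g_Suc)
qed

lemma product_lower_bounds:
  fixes p q m sh e S :: real
  assumes "0 \<le> m" "0 \<le> sh" "0 \<le> e"
    and "m * exp S \<le> p" "sh \<le> p" "e * (m * exp (- S)) \<le> p"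
    and "m * exp (- S) \<le> q" "sh \<le> q" "e * (m * exp S) \<le> q"
  shows "m * sh * exp \<bar>S\<bar> \<le> p * q" "e * (m * exp \<bar>S\<bar>)\<^sup>2 \<le> p * q"
proof -
  have *: "m * sh * exp T \<le> x * y \<and> e * (m * exp T)\<^sup>2 \<le> x * y"
    if "m * exp T \<le> x" "sh \<le> y" "e * (m * exp T) \<le> y" for T x y
  proof -
    have "0 \<le> m * exp T"
      using assms(1) by simp
    then have "(m * exp T) * sh \<le> x * y" "(m * exp T) * (e * (m * exp T)) \<le> x * y"
      using that assms(2,3) by (intro mult_mono; simp)+
    then show ?thesis
      by (simp add: power2_eq_square algebra_simps)
  qed
  have "m * sh * exp \<bar>S\<bar> \<le> p * q \<and> e * (m * exp \<bar>S\<bar>)\<^sup>2 \<le> p * q"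
  proof (cases "0 \<le> S")
    case True
    then show ?thesis
      using *[of S p q] assms by simp
  next
    case False
    then show ?thesis
      using *[of "- S" q p] assms by (simp add: mult.commute[of q])
  qed
  then show "m * sh * exp \<bar>S\<bar> \<le> p * q" "e * (m * exp \<bar>S\<bar>)\<^sup>2 \<le> p * q"
    by simp_all
qed

lemma cosh_le_3:
  fixes x :: real
  assumes "\<bar>x\<bar> \<le> 1"
  shows "cosh x \<le> 3"
proof -
  have "cosh x \<le> cosh 1"
    using assms cosh_real_nonneg_le_iff[of "\<bar>x\<bar>" 1] by simp
  also have "\<dots> \<le> cosh 1 + sinh 1"
    by simp
  also have "\<dots> = exp 1"
    by (rule cosh_plus_sinh)
  also have "\<dots> \<le> 3"
    by (rule exp_le)
  finally show ?thesis .
qed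

lemma log_estimate:
  fixes u0 un \<sigma> D Q :: real
  assumes "0 < u0" "0 < un"
    and "sinh u0 * sinh un * exp \<sigma> \<le> Q" "(cosh un - 1) / 2 * (sinh u0 * exp \<sigma>)\<^sup>2 \<le> Q"
    and "sqrt Q \<le> sinh D"
  shows "\<sigma> \<le> D + 2 * ln D - ln u0 - ln un + 3"
proof -
  define L where "L = u0 * un * exp \<sigma>"
  have L_pos: "0 < L"
    using assms(1,2) by (simp add: L_def)
  have "0 < sinh u0 * sinh un * exp \<sigma>"
    using assms(1,2) by simp
  then have Q_pos: "0 < Q"
    using assms(3) by linarith
  have sinh_ge: "u0 \<le> sinh u0" "un / 2 \<le> sinh (un / 2)"
    using assms(1,2) by (intro sinh_ge_self; simp)+
  have "L \<le> sinh u0 * sinh un * exp \<sigma>"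
    unfolding L_def using assms(1,2) sinh_ge(1) sinh_ge_self[of un] by (intro mult_mono) simp_all
  also have "\<dots> \<le> Q"
    by (fact assms(3))
  also have "\<dots> = (sqrt Q)\<^sup>2"
    using Q_pos by simp
  also have "\<dots> \<le> (sinh D)\<^sup>2"
    using assms(5) Q_pos by (intro power_mono) simp_all
  finally have "L \<le> (sinh D)\<^sup>2" .
  have "L / 2 = un / 2 * (u0 * exp \<sigma>)"
    by (simp add: L_def)
  also have "\<dots> \<le> sinh (un / 2) * (sinh u0 * exp \<sigma>)"
    using assms(1,2) sinh_ge by (intro mult_mono) simp_all
  also have "\<dots> = sqrt ((cosh un - 1) / 2 * (sinh u0 * exp \<sigma>)\<^sup>2)"
    using assms(1,2) by (simp add: cosh_eq_sinh_half[of un] real_sqrt_mult)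
  also have "\<dots> \<le> sqrt Q"
    using assms(4) by simp
  also have "\<dots> \<le> sinh D"
    by (fact assms(5))
  finally have "L \<le> 2 * sinh D"
    by simp
  have "ln L \<le> D + 2 * ln D + 3"
    by (rule ln_le_of_sinh_bounds) fact+
  moreover have "ln L = ln u0 + ln un + \<sigma>"
    using assms(1,2) by (simp add: L_def ln_mult)
  ultimately show ?thesis
    by linarith
qed

section \<open>Linear sequences of geodesics\<close>

locale linear_geodesic_sequence =
  fixes n :: nat and \<gamma> \<eta> :: "nat \<Rightarrow> geod" and u s t :: "nat \<Rightarrow> real"
  assumes geod_ok_\<gamma>: "\<And>i. i \<le> Suc n \<Longrightarrow> geod_ok (\<gamma> i)"
    and left_of_prev: "\<And>i. i \<le> n \<Longrightarrow> gset (\<gamma> (Suc i)) \<subseteq> gleft (\<gamma> i)"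
    and right_of_next: "\<And>i. i < n \<Longrightarrow> gset (\<gamma> i) \<subseteq> gright (\<gamma> (Suc i))"
    and geod_ok_\<eta>: "\<And>i. i \<le> n \<Longrightarrow> geod_ok (\<eta> i)"
    and u_pos: "\<And>i. i \<le> n \<Longrightarrow> 0 < u i"
    and foot0: "\<And>i. i \<le> n \<Longrightarrow> gpt (\<eta> i) 0 = gpt (\<gamma> i) (t i)"
    and perp0: "\<And>i. i \<le> n \<Longrightarrow> mink (gtan (\<eta> i) 0) (gtan (\<gamma> i) (t i)) = 0"
    and foot1: "\<And>i. i \<le> n \<Longrightarrow> gpt (\<eta> i) (u i) = gpt (\<gamma> (Suc i)) (s (Suc i))"
    and perp1: "\<And>i. i \<le> n \<Longrightarrow> mink (gtan (\<eta> i) (u i)) (gtan (\<gamma> (Suc i)) (s (Suc i))) = 0"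
begin

text \<open>\<open>foot i\<close> and \<open>dir i\<close> are the foot of \<open>\<eta> i\<close> on \<open>\<gamma> i\<close> and the direction of \<open>\<gamma> i\<close> there;
  \<open>fwd\<close>, \<open>bwd\<close>, \<open>nrm\<close> are the coordinates \<open>a\<^sub>i\<close>, \<open>b\<^sub>i\<close>, \<open>g\<^sub>i\<close> of the proof idea, and \<open>exit_fwd i\<close>,
  \<open>exit_bwd i\<close> the analogous null coordinates at the foot of \<open>\<eta> i\<close> on \<open>\<gamma> (i + 1)\<close>, taken with
  the direction of \<open>\<gamma> i\<close>.  \<open>vsum i = v\<^sub>1 + \<dots> + v\<^sub>i\<close>.\<close>

definition foot :: "nat \<Rightarrow> pt" where
  "foot i = gpt (\<gamma> i) (t i)"

definition dir :: "nat \<Rightarrow> pt" where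
  "dir i = gtan (\<gamma> i) (t i)"

definition fwd :: "nat \<Rightarrow> real" where
  "fwd i = mink (gnormal (\<gamma> 0)) (foot i + dir i)"

definition bwd :: "nat \<Rightarrow> real" where
  "bwd i = mink (gnormal (\<gamma> 0)) (foot i - dir i)"

definition nrm :: "nat \<Rightarrow> real" where
  "nrm i = mink (gnormal (\<gamma> 0)) (gnormal (\<gamma> i))"

definition exit_fwd :: "nat \<Rightarrow> real" where
  "exit_fwd i = mink (gnormal (\<gamma> 0)) (gpt (\<gamma> (Suc i)) (s (Suc i)) + dir i)"

definition exit_bwd :: "nat \<Rightarrow> real" where
  "exit_bwd i = mink (gnormal (\<gamma> 0)) (gpt (\<gamma> (Suc i)) (s (Suc i)) - dir i)"

definition vsum :: "nat \<Rightarrow> real" where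
  "vsum i = (\<Sum>k=1..i. t k - s k)"

lemma transport:
  assumes "i \<le> n"
  obtains \<epsilon> :: real where "\<epsilon> = 1 \<or> \<epsilon> = -1"
    and "gpt (\<gamma> (Suc i)) (s (Suc i)) = cosh (u i) *\<^sub>R foot i + sinh (u i) *\<^sub>R gnormal (\<gamma> i)"
    and "gtan (\<gamma> (Suc i)) (s (Suc i)) = \<epsilon> *\<^sub>R dir i"
    and "gnormal (\<gamma> (Suc i)) = \<epsilon> *\<^sub>R (sinh (u i) *\<^sub>R foot i + cosh (u i) *\<^sub>R gnormal (\<gamma> i))"
proof -
  have \<gamma>: "geod_ok (\<gamma> i)" "geod_ok (\<gamma> (Suc i))"
    using assms geod_ok_\<gamma> by simp_all
  show ?thesis
    using that unfolding foot_def dir_def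
    by (rule orthogonal_transport[OF \<gamma> geod_ok_\<eta> u_pos foot0 perp0 foot1 perp1 left_of_prev,
          OF assms assms assms assms assms assms assms])
qed

lemma transport_oriented:
  assumes "i < n"
  shows "gtan (\<gamma> (Suc i)) (s (Suc i)) = dir i"
    and "gnormal (\<gamma> (Suc i)) = sinh (u i) *\<^sub>R foot i + cosh (u i) *\<^sub>R gnormal (\<gamma> i)"
proof -
  obtain \<epsilon> :: real where \<epsilon>: "\<epsilon> = 1 \<or> \<epsilon> = -1"
    and T: "gtan (\<gamma> (Suc i)) (s (Suc i)) = \<epsilon> *\<^sub>R dir i"
    and N: "gnormal (\<gamma> (Suc i)) = \<epsilon> *\<^sub>R (sinh (u i) *\<^sub>R foot i + cosh (u i) *\<^sub>R gnormal (\<gamma> i))"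
    using transport[of i] assms by auto
  have g: "geod_ok (\<gamma> i)"
    using assms geod_ok_\<gamma> by simp
  have "foot i \<in> gright (\<gamma> (Suc i))"
    using right_of_next[OF assms] by (auto simp: foot_def gset_def)
  then have "mink (gnormal (\<gamma> (Suc i))) (foot i) < 0"
    by (simp add: gright_def mink_gnormal)
  moreover have "mink (foot i) (foot i) = -1"
    using frame_gpt_gtan[OF g] by (simp add: frame_def foot_def)
  ultimately have "0 < \<epsilon> * sinh (u i)"
    using geod_ok_gnormal(2)[OF g] by (simp add: N foot_def)
  then have "\<epsilon> = 1"
    using \<epsilon> u_pos[of i] assms by auto
  then show "gtan (\<gamma> (Suc i)) (s (Suc i)) = dir i"
    and "gnormal (\<gamma> (Suc i)) = sinh (u i) *\<^sub>R foot i + cosh (u i) *\<^sub>R gnormal (\<gamma> i)"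
    using T N by simp_all
qed

lemma coords_0: "fwd 0 = 0" "bwd 0 = 0" "nrm 0 = 1"
  using geod_ok_gnormal[OF geod_ok_\<gamma>[of 0]] by (simp_all add: fwd_def bwd_def nrm_def foot_def dir_def)

lemma exit_coords:
  assumes "i \<le> n"
  shows "exit_fwd i = (cosh (u i) + 1) / 2 * fwd i + (cosh (u i) - 1) / 2 * bwd i + sinh (u i) * nrm i"
    and "exit_bwd i = (cosh (u i) - 1) / 2 * fwd i + (cosh (u i) + 1) / 2 * bwd i + sinh (u i) * nrm i"
proof -
  obtain \<epsilon> :: real
    where X: "gpt (\<gamma> (Suc i)) (s (Suc i)) = cosh (u i) *\<^sub>R foot i + sinh (u i) *\<^sub>R gnormal (\<gamma> i)"
    using transport[OF assms] by blast
  show "exit_fwd i = (cosh (u i) + 1) / 2 * fwd i + (cosh (u i) - 1) / 2 * bwd i + sinh (u i) * nrm i"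
    and "exit_bwd i = (cosh (u i) - 1) / 2 * fwd i + (cosh (u i) + 1) / 2 * bwd i + sinh (u i) * nrm i"
    by (simp_all add: exit_fwd_def exit_bwd_def fwd_def bwd_def nrm_def X field_simps)
qed

lemma coords_Suc:
  assumes "i < n"
  shows "fwd (Suc i) = exp (t (Suc i) - s (Suc i)) * exit_fwd i"
    and "bwd (Suc i) = exp (- (t (Suc i) - s (Suc i))) * exit_bwd i"
    and "nrm (Suc i) = sinh (u i) * (fwd i + bwd i) / 2 + cosh (u i) * nrm i"
  using transport_oriented[OF assms]
  by (simp_all add: fwd_def bwd_def nrm_def exit_fwd_def exit_bwd_def foot_def dir_def
      gpt_plus_gtan_shift[of _ "t (Suc i)" "s (Suc i)"] gpt_minus_gtan_shift[of _ "t (Suc i)" "s (Suc i)"]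
      field_simps)

lemma growth:
  assumes "1 \<le> i" "i \<le> n"
  shows "sinh (u 0) * exp (vsum i) \<le> fwd i" "sinh (u 0) * exp (- vsum i) \<le> bwd i" "1 \<le> nrm i"
proof -
  have sh: "0 \<le> sinh (u j)" if "j < n" for j
    using u_pos[of j] that by simp
  have "sinh (u 0) * exp (vsum i) \<le> fwd i \<and> sinh (u 0) * exp (- vsum i) \<le> bwd i \<and> 1 \<le> nrm i"
    unfolding vsum_def
  proof (rule chain_growth[where c = "\<lambda>i. cosh (u i)" and sh = "\<lambda>i. sinh (u i)"])
    show "fwd 0 = 0" "bwd 0 = 0" "nrm 0 = 1"
      by (fact coords_0)+
  qed (use assms sh cosh_real_ge_1 coords_Suc exit_coords in auto)
  then show "sinh (u 0) * exp (vsum i) \<le> fwd i" "sinh (u 0) * exp (- vsum i) \<le> bwd i" "1 \<le> nrm i"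
    by simp_all
qed

lemma exit_lower_bounds:
  assumes "u 0 \<le> 1"
  defines "m \<equiv> sinh (u 0)" and "e \<equiv> (cosh (u n) - 1) / 2"
  shows "(m * exp (vsum n) \<le> exit_fwd n \<and> sinh (u n) \<le> exit_fwd n
            \<and> e * (m * exp (- vsum n)) \<le> exit_fwd n)
       \<and> (m * exp (- vsum n) \<le> exit_bwd n \<and> sinh (u n) \<le> exit_bwd n
            \<and> e * (m * exp (vsum n)) \<le> exit_bwd n)"
proof (cases "n = 0")
  case True
  \<comment> \<open>the only place where \<open>u 0 \<le> 1\<close> is needed\<close>
  have "e \<le> 1"
    using cosh_le_3[of "u 0"] assms(1) u_pos[of 0] True by (simp add: e_def)
  then have "e * m \<le> m"
    using u_pos[of 0] by (intro mult_left_le_one_le) (simp_all add: m_def e_def cosh_real_ge_1)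
  moreover have "exit_fwd 0 = m" "exit_bwd 0 = m" "vsum 0 = 0"
    using exit_coords[of 0] by (simp_all add: coords_0 vsum_def m_def)
  ultimately show ?thesis
    using True by (simp add: m_def)
next
  case False
  then have g: "m * exp (vsum n) \<le> fwd n" "m * exp (- vsum n) \<le> bwd n" "1 \<le> nrm n"
    using growth[of n] by (simp_all add: m_def)
  have pos: "0 \<le> m" "0 \<le> sinh (u n)" "0 \<le> e"
    using u_pos[of 0] u_pos[of n] cosh_real_ge_1[of "u n"] by (simp_all add: m_def e_def)
  then have ab: "0 \<le> fwd n" "0 \<le> bwd n"
    using g(1,2) by (smt (verit) exp_ge_zero mult_nonneg_nonneg)+
  have "e * (m * exp (- vsum n)) \<le> e * bwd n" "e * (m * exp (vsum n)) \<le> e * fwd n"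
    using g(1,2) pos(3) by (simp_all add: mult_left_mono)
  then show ?thesis
    using g chain_step_ge[OF cosh_real_ge_1[of "u n"] pos(2) ab g(3)] exit_coords[of n]
    unfolding e_def by (intro conjI) linarith+
qed

lemma exit_product_bounds:
  assumes "u 0 \<le> 1"
  shows "0 \<le> exit_fwd n" "0 \<le> exit_bwd n"
    and "sinh (u 0) * sinh (u n) * exp \<bar>vsum n\<bar> \<le> exit_fwd n * exit_bwd n"
    and "(cosh (u n) - 1) / 2 * (sinh (u 0) * exp \<bar>vsum n\<bar>)\<^sup>2 \<le> exit_fwd n * exit_bwd n"
proof -
  note bounds = exit_lower_bounds[OF assms]
  have pos: "0 \<le> sinh (u 0)" "0 < sinh (u n)" "0 \<le> (cosh (u n) - 1) / 2"
    using u_pos[of 0] u_pos[of n] cosh_real_ge_1[of "u n"] by simp_all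
  with bounds show "0 \<le> exit_fwd n" "0 \<le> exit_bwd n"
    by linarith+
  show "sinh (u 0) * sinh (u n) * exp \<bar>vsum n\<bar> \<le> exit_fwd n * exit_bwd n"
    and "(cosh (u n) - 1) / 2 * (sinh (u 0) * exp \<bar>vsum n\<bar>)\<^sup>2 \<le> exit_fwd n * exit_bwd n"
    using product_lower_bounds[OF pos(1) less_imp_le[OF pos(2)] pos(3)] bounds by blast+
qed

lemma sqrt_exit_le_sinh_gdist:
  assumes "0 \<le> exit_fwd n" "0 \<le> exit_bwd n"
  shows "sqrt (exit_fwd n * exit_bwd n) \<le> sinh (gdist (\<gamma> 0) (\<gamma> (Suc n)))"
proof (rule le_sinh_gdist)
  fix x y
  assume "x \<in> gset (\<gamma> 0)" "y \<in> gset (\<gamma> (Suc n))"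
  then obtain r r' where x: "x = gpt (\<gamma> 0) r" and y: "y = gpt (\<gamma> (Suc n)) r'"
    by (auto simp: gset_def)
  define N h \<tau> where "N = gnormal (\<gamma> 0)" and "h = \<gamma> (Suc n)" and "\<tau> = s (Suc n)"
  obtain \<epsilon> :: real where "\<epsilon> = 1 \<or> \<epsilon> = -1" and T: "gtan h \<tau> = \<epsilon> *\<^sub>R dir n"
    using transport[of n] unfolding h_def \<tau>_def by blast
  \<comment> \<open>the orientation of \<open>\<gamma> (n + 1)\<close> may be either, which only swaps the two factors\<close>
  then have "mink N (gpt h \<tau> + gtan h \<tau>) * mink N (gpt h \<tau> - gtan h \<tau>) = exit_fwd n * exit_bwd n
      \<and> 0 \<le> mink N (gpt h \<tau> + gtan h \<tau>) \<and> 0 \<le> mink N (gpt h \<tau> - gtan h \<tau>)"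
    using assms unfolding exit_fwd_def exit_bwd_def N_def h_def \<tau>_def by auto
  then have "sqrt (exit_fwd n * exit_bwd n) \<le> mink N y"
    using sqrt_null_product_le_mink_gpt[of N h \<tau> r'] by (simp add: y h_def)
  also have "\<dots> \<le> sinh (hdist x y)"
  proof -
    have g0: "geod_ok (\<gamma> 0)" and "geod_ok h"
      using geod_ok_\<gamma> by (simp_all add: h_def)
    then have "x \<in> hyp" "y \<in> hyp"
      by (simp_all add: x y h_def gpt_in_hyp)
    moreover have "mink N N = 1" "mink x N = 0"
      using geod_ok_gnormal(1)[OF g0] geod_ok_gnormal(2)[OF g0, of r]
      by (simp_all add: N_def x mink_commute)
    ultimately have "\<bar>mink N y\<bar> \<le> sinh (hdist x y)"
      by (rule abs_mink_normal_le_sinh_hdist)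
    then show ?thesis
      by simp
  qed
  finally show "sqrt (exit_fwd n * exit_bwd n) \<le> sinh (hdist x y)" .
qed

lemma vsum_bound:
  assumes "u 0 \<le> 1"
  shows "\<bar>vsum n\<bar> \<le> gdist (\<gamma> 0) (\<gamma> (Suc n)) + 2 * ln (gdist (\<gamma> 0) (\<gamma> (Suc n)))
           - ln (u 0) - ln (u n) + 3"
proof (rule log_estimate)
  show "0 < u 0" "0 < u n"
    using u_pos by simp_all
  show "sqrt (exit_fwd n * exit_bwd n) \<le> sinh (gdist (\<gamma> 0) (\<gamma> (Suc n)))"
    using exit_product_bounds(1,2)[OF assms] by (rule sqrt_exit_le_sinh_gdist)
qed (fact exit_product_bounds[OF assms])+

end

theorem lemmaA13:
  fixes n :: nat
    and \<gamma> :: "nat \<Rightarrow> geod"   \<comment> \<open>the geodesics gamma_0 .. gamma_(n+1)\<close>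
    and \<eta> :: "nat \<Rightarrow> geod"   \<comment> \<open>common orthogonals eta_0 .. eta_n\<close>
    and u s t :: "nat \<Rightarrow> real"
  assumes geods: "\<And>i. i \<le> Suc n \<Longrightarrow> geod_ok (\<gamma> i)"
    and disj: "\<And>i j. i \<le> Suc n \<Longrightarrow> j \<le> Suc n \<Longrightarrow> i \<noteq> j \<Longrightarrow> gset (\<gamma> i) \<inter> gset (\<gamma> j) = {}"
    and left: "\<And>i j. i < j \<Longrightarrow> j \<le> Suc n \<Longrightarrow> gset (\<gamma> j) \<subseteq> gleft (\<gamma> i)"
    and sep: "\<And>i j. 1 \<le> i \<Longrightarrow> i \<le> n \<Longrightarrow> j < i \<Longrightarrow> gset (\<gamma> j) \<subseteq> gright (\<gamma> i)"
    and orth_ok: "\<And>i. i \<le> n \<Longrightarrow> geod_ok (\<eta> i)"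
    and u_pos: "\<And>i. i \<le> n \<Longrightarrow> u i > 0"
    and foot0: "\<And>i. i \<le> n \<Longrightarrow> gpt (\<eta> i) 0 = gpt (\<gamma> i) (t i)"
    and perp0: "\<And>i. i \<le> n \<Longrightarrow> mink (gtan (\<eta> i) 0) (gtan (\<gamma> i) (t i)) = 0"
    and foot1: "\<And>i. i \<le> n \<Longrightarrow> gpt (\<eta> i) (u i) = gpt (\<gamma> (Suc i)) (s (Suc i))"
    and perp1: "\<And>i. i \<le> n \<Longrightarrow> mink (gtan (\<eta> i) (u i)) (gtan (\<gamma> (Suc i)) (s (Suc i))) = 0"
    and u0: "u 0 \<le> 1"
    and un: "u n \<le> 1"
  shows "\<bar>\<Sum>i=1..n. t i - s i\<bar>
           \<le> gdist (\<gamma> 0) (\<gamma> (Suc n)) + 2 * ln (gdist (\<gamma> 0) (\<gamma> (Suc n)))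
              - ln (u 0) - ln (u n) + 3"
proof -
  interpret linear_geodesic_sequence n \<gamma> \<eta> u s t
    by unfold_locales (use geods left sep orth_ok u_pos foot0 perp0 foot1 perp1 in auto)
  show ?thesis
    using vsum_bound[OF u0] by (simp add: vsum_def)
qed

end
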